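(* Suppose Assumption A holds. If the quadratic eigenvalue multiplicity $k$ satisfies $k\ge m+2$, then $\operatorname{conv}(\mathcal D)=\mathcal D_{\mathrm{SDP}}$.
   Context: Fix integers $N\ge 1$, $m_I,m_E\ge 0$, $m:=m_I+m_E\ge 1$; $[a,b]=\{a,\dots,b\}$, $[n]=[1,n]$. For $i\in[0,m]$ let $q_i(x)=x^\top A_ix+2b_i^\top x+c_i$ with $A_i\in\mathbb S^N$, $b_i\in\mathbb R^N$, $c_i\in\mathbb R$. $\mathcal D:=\{(x,t)\in\mathbb R^N\times\mathbb R: q_0(x)\le 2t,\ q_i(x)\le0\ \forall i\in[m_I],\ q_i(x)=0\ \forall i\in[m_I+1,m]\}$. Let $Q_i=\begin{pmatrix}c_i& b_i^\top\\ b_i& A_i\end{pmatrix}$; $\mathcal D_{\mathrm{SDP}}:=\{(x,t):\exists X\in\mathbb S^N$ with $Y=\begin{pmatrix}1&x^\top\\ x& X\end{pmatrix}\succeq0$, $\langle Q_0,Y\rangle\le 2t$, $\langle Q_i,Y\rangle\le 0\ \forall i\in[m_I]$, $\langle Q_i,Y\rangle= 0\ \forall i\in[m_I+1,m]\}$. $A(\gamma)=A_0+\sum_{i=1}^m\gamma_iA_i$. Assumption A: the QCQP feasible set $\{x: q_i(x)\le0\ \forall i\in[m_I],\ q_i(x)=0\ \forall i\in[m_I+1,m]\}$ is nonempty and some $\gamma^*\in\mathbb R^m$ with $\gamma^*_i\ge0$ ($i\in[m_I]$) has $A(\gamma^* )\succ0$. The quadratic eigenvalue multiplicity is the largest integer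 $k$ (with $N=nk$) such that for every $i\in[0,m]$ there is $\mathcal A_i\in\mathbb S^n$ with $A_i=I_k\otimes\mathcal A_i$. *)

theory Defs
  imports Main "HOL-Analysis.Analysis"
begin

text \<open>Vectors of R^N are functions nat => real using indices 0..N-1
  (entries at indices >= N are required to be 0). Matrices in S^N are functions
  nat => nat => real, only entries with indices < N are meaningful.
  A family (A i) for i in [0,m] is a function nat => (nat => nat => real), etc.\<close>

definition vec_on :: "nat \<Rightarrow> (nat \<Rightarrow> real) \<Rightarrow> bool" where
  "vec_on N x \<longleftrightarrow> (\<forall>j\<ge>N. x j = 0)"

definition sym_mat :: "nat \<Rightarrow> (nat \<Rightarrow> nat \<Rightarrow> real) \<Rightarrow> bool" where
  "sym_mat n M \<longleftrightarrow> (\<forall>r<n. \<forall>s<n. M r s = M s r)"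

definition qform :: "nat \<Rightarrow> (nat \<Rightarrow> nat \<Rightarrow> real) \<Rightarrow> (nat \<Rightarrow> real) \<Rightarrow> real" where
  "qform n M v = (\<Sum>r<n. \<Sum>s<n. v r * M r s * v s)"

definition psd_mat :: "nat \<Rightarrow> (nat \<Rightarrow> nat \<Rightarrow> real) \<Rightarrow> bool" where
  "psd_mat n M \<longleftrightarrow> sym_mat n M \<and> (\<forall>v. qform n M v \<ge> 0)"

definition pd_mat :: "nat \<Rightarrow> (nat \<Rightarrow> nat \<Rightarrow> real) \<Rightarrow> bool" where
  "pd_mat n M \<longleftrightarrow> sym_mat n M \<and> (\<forall>v. (\<exists>r<n. v r \<noteq> 0) \<longrightarrow> qform n M v > 0)"

definition frob :: "nat \<Rightarrow> (nat \<Rightarrow> nat \<Rightarrow> real) \<Rightarrow> (nat \<Rightarrow> nat \<Rightarrow> real) \<Rightarrow> real" where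
  "frob n M Y = (\<Sum>r<n. \<Sum>s<n. M r s * Y r s)"

definition qfun :: "nat \<Rightarrow> (nat \<Rightarrow> nat \<Rightarrow> real) \<Rightarrow> (nat \<Rightarrow> real) \<Rightarrow> real \<Rightarrow> (nat \<Rightarrow> real) \<Rightarrow> real" where
  "qfun N Ai bi ci x = qform N Ai x + 2 * (\<Sum>r<N. bi r * x r) + ci"

text \<open>The (N+1)x(N+1) block matrix [[c, b^T],[b, A]] (index 0 is the homogenizing one).\<close>
definition block_mat :: "real \<Rightarrow> (nat \<Rightarrow> real) \<Rightarrow> (nat \<Rightarrow> nat \<Rightarrow> real) \<Rightarrow> nat \<Rightarrow> nat \<Rightarrow> real" where
  "block_mat c b A r s =
     (if r = 0 \<and> s = 0 then c
      else if r = 0 then b (s - 1)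
      else if s = 0 then b (r - 1)
      else A (r - 1) (s - 1))"

definition feasible :: "nat \<Rightarrow> nat \<Rightarrow> nat \<Rightarrow> (nat \<Rightarrow> nat \<Rightarrow> nat \<Rightarrow> real) \<Rightarrow> (nat \<Rightarrow> nat \<Rightarrow> real)
    \<Rightarrow> (nat \<Rightarrow> real) \<Rightarrow> (nat \<Rightarrow> real) \<Rightarrow> bool" where
  "feasible N mI m A b c x \<longleftrightarrow> vec_on N x
     \<and> (\<forall>i\<in>{1..mI}. qfun N (A i) (b i) (c i) x \<le> 0)
     \<and> (\<forall>i\<in>{mI+1..m}. qfun N (A i) (b i) (c i) x = 0)"

definition Dset :: "nat \<Rightarrow> nat \<Rightarrow> nat \<Rightarrow> (nat \<Rightarrow> nat \<Rightarrow> nat \<Rightarrow> real) \<Rightarrow> (nat \<Rightarrow> nat \<Rightarrow> real)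
    \<Rightarrow> (nat \<Rightarrow> real) \<Rightarrow> ((nat \<Rightarrow> real) \<times> real) set" where
  "Dset N mI m A b c = {(x, t). feasible N mI m A b c x \<and> qfun N (A 0) (b 0) (c 0) x \<le> 2 * t}"

definition Dsdp :: "nat \<Rightarrow> nat \<Rightarrow> nat \<Rightarrow> (nat \<Rightarrow> nat \<Rightarrow> nat \<Rightarrow> real) \<Rightarrow> (nat \<Rightarrow> nat \<Rightarrow> real)
    \<Rightarrow> (nat \<Rightarrow> real) \<Rightarrow> ((nat \<Rightarrow> real) \<times> real) set" where
  "Dsdp N mI m A b c = {(x, t). vec_on N x \<and> (\<exists>X. sym_mat N X \<and>
      (let Y = block_mat 1 x X in
        psd_mat (N + 1) Y
        \<and> frob (N + 1) (block_mat (c 0) (b 0) (A 0)) Y \<le> 2 * t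
        \<and> (\<forall>i\<in>{1..mI}. frob (N + 1) (block_mat (c i) (b i) (A i)) Y \<le> 0)
        \<and> (\<forall>i\<in>{mI+1..m}. frob (N + 1) (block_mat (c i) (b i) (A i)) Y = 0)))}"

definition conv_hull :: "((nat \<Rightarrow> real) \<times> real) set \<Rightarrow> ((nat \<Rightarrow> real) \<times> real) set" where
  "conv_hull S = {p. \<exists>(r::nat) (w::nat \<Rightarrow> real) P.
      (\<forall>j<r. 0 \<le> w j \<and> P j \<in> S) \<and> (\<Sum>j<r. w j) = 1
      \<and> p = ((\<lambda>l. \<Sum>j<r. w j * fst (P j) l), (\<Sum>j<r. w j * snd (P j)))}"

definition Agamma :: "nat \<Rightarrow> (nat \<Rightarrow> nat \<Rightarrow> nat \<Rightarrow> real) \<Rightarrow> (nat \<Rightarrow> real) \<Rightarrow> nat \<Rightarrow> nat \<Rightarrow> real" where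
  "Agamma m A \<gamma> r s = A 0 r s + (\<Sum>i\<in>{1..m}. \<gamma> i * A i r s)"

text \<open>I_k (Kronecker) M for an n x n matrix M: entry (p*n+a, q*n+b) is [p=q] M a b.\<close>
definition kron_I :: "nat \<Rightarrow> (nat \<Rightarrow> nat \<Rightarrow> real) \<Rightarrow> nat \<Rightarrow> nat \<Rightarrow> real" where
  "kron_I n M r s = (if r div n = s div n then M (r mod n) (s mod n) else 0)"

definition has_multiplicity :: "nat \<Rightarrow> nat \<Rightarrow> (nat \<Rightarrow> nat \<Rightarrow> nat \<Rightarrow> real) \<Rightarrow> nat \<Rightarrow> bool" where
  "has_multiplicity N m A k \<longleftrightarrow> (\<exists>n. N = n * k \<and>
     (\<forall>i\<le>m. \<exists>M. sym_mat n M \<and> (\<forall>r<N. \<forall>s<N. A i r s = kron_I n M r s)))"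

definition quad_eig_mult :: "nat \<Rightarrow> nat \<Rightarrow> (nat \<Rightarrow> nat \<Rightarrow> nat \<Rightarrow> real) \<Rightarrow> nat" where
  "quad_eig_mult N m A = (GREATEST k. has_multiplicity N m A k)"

end

theory Submission
  imports Defs
begin

text \<open>If (x, t) lies in D_SDP, then Z = X - x x^T is positive semidefinite, hence a sum of
  rank-one matrices z z^T, and every constraint value becomes <Q_i, Y> = q_i(x) + sum_z z^T A_i z.
  Since A_i = I_k (x) M_i, each z^T A_i z splits into k block terms v^T M_i v with v in R^n, so
  <Q_i, Y> = q_i(x) + sum_v v^T M_i v over a finite list of vectors v.  One such term is absorbed
  by moving x to x + u and x - u with u = beta (x) v and |beta| = 1: then u^T A_i u = v^T M_i v,
  and since k >= m + 2 > m + 1, beta can be chosen so that u is orthogonal to the m + 1 gradients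
  A_i x + b_i (one linear equation in beta each), which kills the cross terms.  Thus (x, t) is the
  midpoint of two points with one term fewer, and induction on the list puts (x, t) into conv(D).
  The reverse inclusion holds because D embeds into the convex set D_SDP via X = x x^T.\<close>

definition bform :: "nat \<Rightarrow> (nat \<Rightarrow> nat \<Rightarrow> real) \<Rightarrow> (nat \<Rightarrow> real) \<Rightarrow> (nat \<Rightarrow> real) \<Rightarrow> real" where
  "bform n M v w = (\<Sum>r<n. \<Sum>s<n. v r * M r s * w s)"

definition unit_vec :: "nat \<Rightarrow> nat \<Rightarrow> real" where
  "unit_vec j r = (if r = j then 1 else 0)"

lemma unit_vec_mult_left: "unit_vec j r * a = (if r = j then a else 0)"
  and unit_vec_mult_right: "a * unit_vec j r = (if r = j then a else 0)"
  by (simp_all add: unit_vec_def)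

lemma qform_lincomb:
  "qform n M (\<lambda>r. a * v r + b * w r)
     = a\<^sup>2 * qform n M v + a * b * (bform n M v w + bform n M w v) + b\<^sup>2 * qform n M w"
  unfolding qform_def bform_def power2_eq_square
  by (simp add: algebra_simps sum.distrib sum_distrib_left)

lemma qform_cong: "(\<And>a. a < n \<Longrightarrow> v a = w a) \<Longrightarrow> qform n M v = qform n M w"
  unfolding qform_def by (intro sum.cong refl) auto

lemma qform_scale: "qform n M (\<lambda>a. c * v a) = c\<^sup>2 * qform n M v"
  using qform_lincomb[of n M c v 0 v] by simp

lemma bform_unit_vec_left:
  assumes "j < n" shows "bform n M (unit_vec j) w = (\<Sum>s<n. M j s * w s)"
proof -
  have "bform n M (unit_vec j) w = (\<Sum>r<n. unit_vec j r * (\<Sum>s<n. M r s * w s))"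
    by (simp add: bform_def sum_distrib_left mult.assoc)
  then show ?thesis by (simp add: unit_vec_mult_left assms)
qed

lemma bform_unit_vec_right: "j < n \<Longrightarrow> bform n M w (unit_vec j) = (\<Sum>r<n. w r * M r j)"
  by (simp add: bform_def unit_vec_mult_right)

lemma bform_unit_vec: "j < n \<Longrightarrow> s < n \<Longrightarrow> bform n M (unit_vec j) (unit_vec s) = M j s"
  by (simp add: bform_unit_vec_left unit_vec_mult_right)

lemma qform_unit_vec: "j < n \<Longrightarrow> qform n M (unit_vec j) = M j j"
  using bform_unit_vec[of j n j M] by (simp add: bform_def qform_def)

lemma qform_diff_rank_one:
  "qform n (\<lambda>r s. Z r s - z r * z s) v = qform n Z v - (\<Sum>r<n. z r * v r)\<^sup>2"
  unfolding qform_def power2_eq_square sum_product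
  by (simp add: algebra_simps sum_subtractf)

lemma psd_mat_diag_nonneg: "psd_mat n Z \<Longrightarrow> j < n \<Longrightarrow> 0 \<le> Z j j"
  by (metis psd_mat_def qform_unit_vec)

lemma psd_mat_zero_diag_imp_zero_row:
  assumes psd: "psd_mat n Z" and j: "j < n" and s: "s < n" and zero: "Z j j = 0"
  shows "Z j s = 0"
proof (rule ccontr)
  assume ne: "Z j s \<noteq> 0"
  have "Z s j = Z j s" using psd j s by (simp add: psd_mat_def sym_mat_def)
  then have "qform n Z (\<lambda>r. a * unit_vec j r + 1 * unit_vec s r) = 2 * a * Z j s + Z s s" for a
    unfolding qform_lincomb by (simp add: bform_unit_vec qform_unit_vec j s zero)
  moreover have "0 \<le> qform n Z v" for v using psd by (simp add: psd_mat_def)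
  ultimately have "0 \<le> 2 * (- (Z s s + 1) / (2 * Z j s)) * Z j s + Z s s" by metis
  then show False using ne by (simp add: field_simps)
qed

text \<open>For Z j j = 0 the division below yields z = 0, which is the right vector in that case too.\<close>
lemma psd_mat_subtract_column:
  assumes psd: "psd_mat n Z" and j: "j < n"
  defines "z \<equiv> \<lambda>r. Z r j / sqrt (Z j j)"
  shows "psd_mat n (\<lambda>r s. Z r s - z r * z s)" and "\<And>s. s < n \<Longrightarrow> Z j s = z j * z s"
proof -
  have sym: "\<And>r s. r < n \<Longrightarrow> s < n \<Longrightarrow> Z r s = Z s r" using psd by (simp add: psd_mat_def sym_mat_def)
  show "Z j s = z j * z s" if s: "s < n" for s
  proof (cases "Z j j = 0")
    case True
    then show ?thesis using psd_mat_zero_diag_imp_zero_row[OF psd j s] by (simp add: z_def)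
  next
    case False
    then have "Z j j > 0" using psd_mat_diag_nonneg[OF psd j] by simp
    then show ?thesis using sym[OF s j] by (simp add: z_def real_div_sqrt)
  qed
  show "psd_mat n (\<lambda>r s. Z r s - z r * z s)"
    unfolding psd_mat_def sym_mat_def
  proof (intro conjI allI impI)
    show "Z r s - z r * z s = Z s r - z s * z r" if "r < n" "s < n" for r s
      using sym[OF that] by simp
  next
    fix v
    define S where "S = (\<Sum>s<n. Z j s * v s)"
    have "(\<Sum>r<n. z r * v r) = S / sqrt (Z j j)"
      unfolding z_def S_def sum_divide_distrib using sym j by (intro sum.cong) auto
    then have sq: "(\<Sum>r<n. z r * v r)\<^sup>2 = S\<^sup>2 / Z j j"
      using psd_mat_diag_nonneg[OF psd j] by (simp add: power_divide)
    have left: "bform n Z (unit_vec j) v = S" by (simp add: bform_unit_vec_left j S_def)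
    have right: "bform n Z v (unit_vec j) = S"
      unfolding bform_unit_vec_right[OF j] S_def using sym j by (intro sum.cong) auto
    have "0 \<le> qform n Z (\<lambda>r. 1 * v r + (- S / Z j j) * unit_vec j r)"
      using psd by (simp add: psd_mat_def)
    also have "\<dots> = qform n Z v - S\<^sup>2 / Z j j"
      unfolding qform_lincomb by (simp add: left right qform_unit_vec j power2_eq_square)
    finally show "0 \<le> qform n (\<lambda>r s. Z r s - z r * z s) v"
      by (simp add: qform_diff_rank_one sq)
  qed
qed

lemma psd_mat_sum_rank_one_below:
  assumes "psd_mat n Z" and "\<forall>r<n. \<forall>s<n. j \<le> r \<or> j \<le> s \<longrightarrow> Z r s = 0"
  shows "\<exists>zs. \<forall>r<n. \<forall>s<n. Z r s = (\<Sum>z\<leftarrow>zs. z r * z s)"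
  using assms
proof (induction j arbitrary: Z)
  case 0
  then show ?case by (intro exI[of _ "[]"]) simp
next
  case (Suc j)
  show ?case
  proof (cases "j < n")
    case False
    then show ?thesis using Suc by force
  next
    case j: True
    define z where "z = (\<lambda>r. Z r j / sqrt (Z j j))"
    define Z' where "Z' = (\<lambda>r s. Z r s - z r * z s)"
    have psd: "psd_mat n Z'" and row: "\<And>s. s < n \<Longrightarrow> Z j s = z j * z s"
      using psd_mat_subtract_column[OF Suc.prems(1) j] unfolding Z'_def z_def by auto
    have sym: "\<And>r s. r < n \<Longrightarrow> s < n \<Longrightarrow> Z r s = Z s r"
      using Suc.prems(1) by (simp add: psd_mat_def sym_mat_def)
    have "Z' r s = 0" if rs: "r < n" "s < n" "j \<le> r \<or> j \<le> s" for r s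
    proof -
      consider "r = j" | "s = j" | "Suc j \<le> r" | "Suc j \<le> s" using rs(3) by linarith
      then show ?thesis
      proof cases
        case 1 then show ?thesis using row[OF rs(2)] by (simp add: Z'_def)
      next
        case 2 then show ?thesis using row[OF rs(1)] sym[OF rs(1,2)] by (simp add: Z'_def mult.commute)
      next
        case 3 then show ?thesis using Suc.prems(2) rs j by (simp add: Z'_def z_def)
      next
        case 4 then show ?thesis using Suc.prems(2) rs j by (simp add: Z'_def z_def)
      qed
    qed
    then obtain zs where "\<forall>r<n. \<forall>s<n. Z' r s = (\<Sum>z\<leftarrow>zs. z r * z s)"
      using Suc.IH[OF psd] by blast
    then have "\<forall>r<n. \<forall>s<n. Z r s = (\<Sum>z\<leftarrow>z # zs. z r * z s)"
      by (simp add: Z'_def algebra_simps)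
    then show ?thesis by blast
  qed
qed

lemma psd_mat_sum_rank_one:
  "psd_mat n Z \<Longrightarrow> \<exists>zs. \<forall>r<n. \<forall>s<n. Z r s = (\<Sum>z\<leftarrow>zs. z r * z s)"
  using psd_mat_sum_rank_one_below[of n Z n] by simp

lemma qform_block_mat:
  "qform (Suc N) (block_mat c b A) v
     = c * (v 0)\<^sup>2 + 2 * v 0 * (\<Sum>r<N. b r * v (Suc r)) + qform N A (\<lambda>r. v (Suc r))"
  unfolding qform_def power2_eq_square
  by (simp add: sum.lessThan_Suc_shift block_mat_def algebra_simps sum.distrib sum_distrib_left
      del: sum.lessThan_Suc)

lemma frob_block_mat:
  "frob (Suc N) (block_mat c b A) (block_mat 1 x X)
     = qfun N A b c x + frob N A (\<lambda>r s. X r s - x r * x s)"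
  unfolding frob_def qfun_def qform_def
  by (simp add: sum.lessThan_Suc_shift block_mat_def algebra_simps sum.distrib sum_subtractf
      sum_distrib_left del: sum.lessThan_Suc)

lemma qform_outer: "qform n (\<lambda>r s. x r * x s) v = (\<Sum>r<n. x r * v r)\<^sup>2"
  using qform_diff_rank_one[of n "\<lambda>_ _. 0" x v] by (simp add: qform_def sum_negf)

lemma psd_mat_block_outer: "psd_mat (Suc N) (block_mat 1 x (\<lambda>r s. x r * x s))"
proof -
  have "qform (Suc N) (block_mat 1 x (\<lambda>r s. x r * x s)) v = (v 0 + (\<Sum>r<N. x r * v (Suc r)))\<^sup>2" for v
    unfolding qform_block_mat qform_outer by (simp add: power2_sum)
  then show ?thesis
    unfolding psd_mat_def sym_mat_def by (auto simp: block_mat_def mult.commute)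
qed

lemma psd_mat_schur_complement:
  assumes psd: "psd_mat (Suc N) (block_mat 1 x X)"
  shows "psd_mat N (\<lambda>r s. X r s - x r * x s)"
  unfolding psd_mat_def
proof (intro conjI allI)
  have "sym_mat N X"
    using psd unfolding psd_mat_def sym_mat_def by (force simp: block_mat_def)
  then show "sym_mat N (\<lambda>r s. X r s - x r * x s)" by (simp add: sym_mat_def mult.commute)
next
  fix v
  define S where "S = (\<Sum>r<N. x r * v r)"
  have "0 \<le> qform (Suc N) (block_mat 1 x X) (\<lambda>r. if r = 0 then - S else v (r - 1))"
    using psd by (simp add: psd_mat_def)
  also have "\<dots> = qform N X v - S\<^sup>2"
    unfolding qform_block_mat by (simp add: S_def power2_eq_square)
  finally show "0 \<le> qform N (\<lambda>r s. X r s - x r * x s) v"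
    by (simp add: qform_diff_rank_one S_def)
qed

definition sdp_witness :: "nat \<Rightarrow> nat \<Rightarrow> nat \<Rightarrow> (nat \<Rightarrow> nat \<Rightarrow> nat \<Rightarrow> real) \<Rightarrow> (nat \<Rightarrow> nat \<Rightarrow> real)
    \<Rightarrow> (nat \<Rightarrow> real) \<Rightarrow> (nat \<Rightarrow> real) \<Rightarrow> real \<Rightarrow> (nat \<Rightarrow> nat \<Rightarrow> real) \<Rightarrow> bool" where
  "sdp_witness N mI m A b c x t X \<longleftrightarrow> sym_mat N X \<and> psd_mat (N + 1) (block_mat 1 x X)
     \<and> frob (N + 1) (block_mat (c 0) (b 0) (A 0)) (block_mat 1 x X) \<le> 2 * t
     \<and> (\<forall>i\<in>{1..mI}. frob (N + 1) (block_mat (c i) (b i) (A i)) (block_mat 1 x X) \<le> 0)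
     \<and> (\<forall>i\<in>{mI+1..m}. frob (N + 1) (block_mat (c i) (b i) (A i)) (block_mat 1 x X) = 0)"

lemma mem_Dsdp_iff:
  "p \<in> Dsdp N mI m A b c \<longleftrightarrow> vec_on N (fst p) \<and> (\<exists>X. sdp_witness N mI m A b c (fst p) (snd p) X)"
  by (cases p) (simp add: Dsdp_def sdp_witness_def Let_def)

lemma Dset_subset_Dsdp: "Dset N mI m A b c \<subseteq> Dsdp N mI m A b c"
proof
  fix p assume "p \<in> Dset N mI m A b c"
  then obtain x t where p: "p = (x, t)" and "feasible N mI m A b c x"
    and "qfun N (A 0) (b 0) (c 0) x \<le> 2 * t"
    by (auto simp: Dset_def)
  moreover have "frob (Suc N) (block_mat (c i) (b i) (A i)) (block_mat 1 x (\<lambda>r s. x r * x s))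
      = qfun N (A i) (b i) (c i) x" for i
    unfolding frob_block_mat by (simp add: frob_def)
  ultimately have "sdp_witness N mI m A b c x t (\<lambda>r s. x r * x s)"
    using psd_mat_block_outer[of N x]
    by (simp add: sdp_witness_def feasible_def sym_mat_def mult.commute)
  then show "p \<in> Dsdp N mI m A b c"
    using \<open>feasible N mI m A b c x\<close> by (auto simp: p mem_Dsdp_iff feasible_def)
qed

lemma qform_weighted_sum:
  "qform n (\<lambda>a b. \<Sum>j<(r::nat). w j * F j a b) v = (\<Sum>j<r. w j * qform n (F j) v)"
  by (induction r) (simp_all add: qform_def algebra_simps sum.distrib sum_distrib_left)

lemma frob_weighted_sum:
  "frob n Q (\<lambda>a b. \<Sum>j<(r::nat). w j * F j a b) = (\<Sum>j<r. w j * frob n Q (F j))"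
  by (induction r) (simp_all add: frob_def algebra_simps sum.distrib sum_distrib_left)

lemma block_mat_weighted_sum:
  assumes "(\<Sum>j<(r::nat). w j) = 1"
  shows "block_mat 1 (\<lambda>l. \<Sum>j<r. w j * x j l) (\<lambda>a b. \<Sum>j<r. w j * X j a b)
       = (\<lambda>a b. \<Sum>j<r. w j * block_mat 1 (x j) (X j) a b)"
  using assms by (intro ext) (simp add: block_mat_def)

lemma Dsdp_convex_combination:
  fixes r :: nat
  assumes P: "\<forall>j<r. 0 \<le> w j \<and> P j \<in> Dsdp N mI m A b c" and w: "(\<Sum>j<r. w j) = 1"
  shows "((\<lambda>l. \<Sum>j<r. w j * fst (P j) l), \<Sum>j<r. w j * snd (P j)) \<in> Dsdp N mI m A b c"
proof -
  let ?Q = "\<lambda>i. block_mat (c i) (b i) (A i)"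
  let ?x = "\<lambda>j. fst (P j)" and ?t = "\<lambda>j. snd (P j)"
  have "\<forall>j<r. \<exists>X. sdp_witness N mI m A b c (?x j) (?t j) X"
    using P by (simp add: mem_Dsdp_iff)
  then obtain X where X: "\<forall>j<r. sdp_witness N mI m A b c (?x j) (?t j) (X j)"
    by metis
  define Y where "Y = block_mat 1 (\<lambda>l. \<Sum>j<r. w j * ?x j l) (\<lambda>a b. \<Sum>j<r. w j * X j a b)"
  have Y: "Y = (\<lambda>a b. \<Sum>j<r. w j * block_mat 1 (?x j) (X j) a b)"
    unfolding Y_def by (rule block_mat_weighted_sum[OF w])
  have frob: "frob (N + 1) (?Q i) Y = (\<Sum>j<r. w j * frob (N + 1) (?Q i) (block_mat 1 (?x j) (X j)))" for i
    unfolding Y by (rule frob_weighted_sum)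
  have "sym_mat N (\<lambda>a b. \<Sum>j<r. w j * X j a b)"
    using X unfolding sdp_witness_def sym_mat_def by (intro allI impI sum.cong refl) auto
  moreover have "sym_mat (N + 1) Y"
    using X unfolding Y sdp_witness_def psd_mat_def sym_mat_def by (intro allI impI sum.cong refl) auto
  moreover have "0 \<le> qform (N + 1) Y v" for v
    unfolding Y qform_weighted_sum using P X by (intro sum_nonneg) (simp add: sdp_witness_def psd_mat_def)
  moreover have "frob (N + 1) (?Q 0) Y \<le> 2 * (\<Sum>j<r. w j * ?t j)"
  proof -
    have "frob (N + 1) (?Q 0) Y \<le> (\<Sum>j<r. w j * (2 * ?t j))"
      unfolding frob using P X by (intro sum_mono) (simp add: sdp_witness_def mult_left_mono)
    then show ?thesis by (simp add: sum_distrib_left mult.left_commute)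
  qed
  moreover have "\<forall>i\<in>{1..mI}. frob (N + 1) (?Q i) Y \<le> 0"
    unfolding frob using P X by (intro ballI sum_nonpos) (simp add: sdp_witness_def mult_nonneg_nonpos)
  moreover have "\<forall>i\<in>{mI+1..m}. frob (N + 1) (?Q i) Y = 0"
    unfolding frob using X by (simp add: sdp_witness_def)
  moreover have "vec_on N (\<lambda>l. \<Sum>j<r. w j * ?x j l)"
    using P unfolding mem_Dsdp_iff vec_on_def by simp
  ultimately show ?thesis
    unfolding mem_Dsdp_iff sdp_witness_def psd_mat_def Y_def by auto
qed

lemma conv_hull_Dset_subset_Dsdp: "conv_hull (Dset N mI m A b c) \<subseteq> Dsdp N mI m A b c"
  using Dsdp_convex_combination Dset_subset_Dsdp unfolding conv_hull_def by blast

lemma conv_hull_superset: "p \<in> S \<Longrightarrow> p \<in> conv_hull S"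
  unfolding conv_hull_def by (auto intro!: exI[of _ 1] exI[of _ "\<lambda>_. 1"] exI[of _ "\<lambda>_. p"])

lemma sum_lessThan_add: "(\<Sum>j<(a::nat)+b. f j) = (\<Sum>j<a. f j) + (\<Sum>j<b. f (a+j))"
  by (induction b) (simp_all add: add.assoc)

lemma conv_hull_midpoint:
  assumes "(x, t) \<in> conv_hull S" and "(y, s) \<in> conv_hull S"
  shows "((\<lambda>l. (x l + y l) / 2), (t + s) / 2) \<in> conv_hull S"
proof -
  obtain r1 :: nat and w1 P1 where 1: "\<forall>j<r1. 0 \<le> w1 j \<and> P1 j \<in> S" "(\<Sum>j<r1. w1 j) = 1"
    "(x, t) = ((\<lambda>l. \<Sum>j<r1. w1 j * fst (P1 j) l), (\<Sum>j<r1. w1 j * snd (P1 j)))"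
    using assms(1) unfolding conv_hull_def by blast
  obtain r2 :: nat and w2 P2 where 2: "\<forall>j<r2. 0 \<le> w2 j \<and> P2 j \<in> S" "(\<Sum>j<r2. w2 j) = 1"
    "(y, s) = ((\<lambda>l. \<Sum>j<r2. w2 j * fst (P2 j) l), (\<Sum>j<r2. w2 j * snd (P2 j)))"
    using assms(2) unfolding conv_hull_def by blast
  define w where "w = (\<lambda>j. if j < r1 then w1 j / 2 else w2 (j - r1) / 2)"
  define P where "P = (\<lambda>j. if j < r1 then P1 j else P2 (j - r1))"
  have "\<forall>j<r1+r2. 0 \<le> w j \<and> P j \<in> S"
    using 1(1) 2(1) unfolding w_def P_def by (auto simp: not_less)
  moreover have "(\<Sum>j<r1+r2. w j) = 1"
    unfolding sum_lessThan_add w_def using 1(2) 2(2) by (simp add: sum_divide_distrib[symmetric])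
  moreover have "((\<lambda>l. (x l + y l) / 2), (t + s) / 2)
      = ((\<lambda>l. \<Sum>j<r1+r2. w j * fst (P j) l), \<Sum>j<r1+r2. w j * snd (P j))"
    using 1(3) 2(3) unfolding sum_lessThan_add w_def P_def
    by (simp add: add_divide_distrib sum_divide_distrib)
  ultimately show ?thesis unfolding conv_hull_def by blast
qed

lemma sum_lessThan_mult_blocks:
  fixes f :: "nat \<Rightarrow> 'a::comm_monoid_add"
  shows "(\<Sum>r<n * k. f r) = (\<Sum>p<k. \<Sum>a<n. f (p * n + a))"
proof -
  have "(\<Sum>r<k * n. f r) = (\<Sum>p<k. \<Sum>r\<in>{p * n..<p * n + n}. f r)"
    by (rule sum.nat_group[symmetric])
  also have "\<dots> = (\<Sum>p<k. \<Sum>a<n. f (p * n + a))"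
  proof (rule sum.cong[OF refl])
    fix p
    have "(\<Sum>r\<in>{0 + p * n..<n + p * n}. f r) = (\<Sum>a\<in>{0..<n}. f (a + p * n))"
      by (rule sum.shift_bounds_nat_ivl)
    then show "(\<Sum>r\<in>{p * n..<p * n + n}. f r) = (\<Sum>a<n. f (p * n + a))"
      by (simp add: atLeast0LessThan add.commute)
  qed
  finally show ?thesis by (simp add: mult.commute)
qed

lemma kron_I_blocks:
  "a < n \<Longrightarrow> a' < n \<Longrightarrow> kron_I n M (p * n + a) (q * n + a') = (if p = q then M a a' else 0)"
  by (simp add: kron_I_def)

lemma qform_kron_I:
  assumes "\<forall>r<n * k. \<forall>s<n * k. A r s = kron_I n M r s"
  shows "qform (n * k) A z = (\<Sum>p<k. qform n M (\<lambda>a. z (p * n + a)))"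
proof -
  have "qform (n * k) A z = (\<Sum>r<n * k. \<Sum>s<n * k. z r * kron_I n M r s * z s)"
    unfolding qform_def using assms by (intro sum.cong refl) auto
  also have "\<dots> = (\<Sum>p<k. \<Sum>a<n. \<Sum>q<k. \<Sum>a'<n.
      z (p * n + a) * kron_I n M (p * n + a) (q * n + a') * z (q * n + a'))"
    by (simp add: sum_lessThan_mult_blocks)
  also have "\<dots> = (\<Sum>p<k. \<Sum>a<n. \<Sum>a'<n. z (p * n + a) * M a a' * z (p * n + a'))"
  proof (intro sum.cong[OF refl])
    fix p a assume "p \<in> {..<k}" "a \<in> {..<n}"
    then have "(\<Sum>q<k. \<Sum>a'<n. z (p * n + a) * kron_I n M (p * n + a) (q * n + a') * z (q * n + a'))
        = (\<Sum>q<k. if p = q then \<Sum>a'<n. z (p * n + a) * M a a' * z (p * n + a') else 0)"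
      by (intro sum.cong refl) (auto simp: kron_I_blocks)
    then show "(\<Sum>q<k. \<Sum>a'<n. z (p * n + a) * kron_I n M (p * n + a) (q * n + a') * z (q * n + a'))
        = (\<Sum>a'<n. z (p * n + a) * M a a' * z (p * n + a'))"
      using \<open>p \<in> {..<k}\<close> by simp
  qed
  finally show ?thesis by (simp add: qform_def)
qed

definition tensor_vec :: "nat \<Rightarrow> nat \<Rightarrow> (nat \<Rightarrow> real) \<Rightarrow> (nat \<Rightarrow> real) \<Rightarrow> nat \<Rightarrow> real" where
  "tensor_vec n k \<beta> v r = (if r < n * k then \<beta> (r div n) * v (r mod n) else 0)"

lemma tensor_vec_blocks:
  assumes "p < k" "a < n"
  shows "tensor_vec n k \<beta> v (p * n + a) = \<beta> p * v a"
proof -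
  have "p * n + a < Suc p * n" using assms(2) by simp
  also have "\<dots> \<le> k * n" using assms(1) by (intro mult_right_mono) auto
  finally show ?thesis using assms(2) by (simp add: tensor_vec_def mult.commute)
qed

lemma vec_on_tensor_vec: "vec_on (n * k) (tensor_vec n k \<beta> v)"
  by (simp add: vec_on_def tensor_vec_def)

lemma qform_tensor_vec:
  assumes "\<forall>r<n * k. \<forall>s<n * k. A r s = kron_I n M r s" and "(\<Sum>p<k. (\<beta> p)\<^sup>2) = 1"
  shows "qform (n * k) A (tensor_vec n k \<beta> v) = qform n M v"
proof -
  have "qform (n * k) A (tensor_vec n k \<beta> v) = (\<Sum>p<k. qform n M (\<lambda>a. \<beta> p * v a))"
    unfolding qform_kron_I[OF assms(1)] by (intro sum.cong refl qform_cong) (simp add: tensor_vec_blocks)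
  also have "\<dots> = qform n M v"
    using assms(2) by (simp add: qform_scale sum_distrib_right[symmetric])
  finally show ?thesis .
qed

lemma sum_tensor_vec:
  "(\<Sum>s<n * k. g s * tensor_vec n k \<beta> v s) = (\<Sum>p<k. \<beta> p * (\<Sum>a<n. g (p * n + a) * v a))"
  unfolding sum_lessThan_mult_blocks sum_distrib_left
  by (intro sum.cong refl) (simp add: tensor_vec_blocks)

lemma homogeneous_system_nontrivial_solution:
  fixes h :: "nat \<Rightarrow> 'a \<Rightarrow> real"
  assumes "finite S" and "m' < card S"
  shows "\<exists>\<alpha>. (\<exists>q\<in>S. \<alpha> q \<noteq> 0) \<and> (\<forall>i<m'. (\<Sum>q\<in>S. \<alpha> q * h i q) = 0)"
  using assms
proof (induction m' arbitrary: S h)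
  case 0
  then have "S \<noteq> {}" by auto
  then show ?case by (intro exI[of _ "\<lambda>_. 1"]) auto
next
  case (Suc m')
  show ?case
  proof (cases "\<forall>q\<in>S. h m' q = 0")
    case True
    then show ?thesis using Suc.IH[of S h] Suc.prems by (auto simp: less_Suc_eq)
  next
    case False
    then obtain q0 where q0: "q0 \<in> S" "h m' q0 \<noteq> 0" by blast
    define S' where "S' = S - {q0}"
    \<comment> \<open>Eliminate the unknown at q0 using equation m' as pivot row, then recover its value.\<close>
    define h' where "h' = (\<lambda>i q. h i q - h i q0 * h m' q / h m' q0)"
    have "finite S'" "m' < card S'" using Suc.prems q0(1) by (auto simp: S'_def)
    then obtain \<beta> where \<beta>: "\<exists>q\<in>S'. \<beta> q \<noteq> 0" "\<forall>i<m'. (\<Sum>q\<in>S'. \<beta> q * h' i q) = 0"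
      using Suc.IH[of S' h'] by blast
    define \<alpha> where "\<alpha> = \<beta>(q0 := - (\<Sum>q\<in>S'. \<beta> q * h m' q) / h m' q0)"
    have reduced: "(\<Sum>q\<in>S. \<alpha> q * h i q) = (\<Sum>q\<in>S'. \<beta> q * h' i q)" for i
    proof -
      have "(\<Sum>q\<in>S. \<alpha> q * h i q) = \<alpha> q0 * h i q0 + (\<Sum>q\<in>S'. \<alpha> q * h i q)"
        unfolding S'_def using Suc.prems(1) q0(1) by (rule sum.remove)
      also have "(\<Sum>q\<in>S'. \<alpha> q * h i q) = (\<Sum>q\<in>S'. \<beta> q * h i q)"
        unfolding \<alpha>_def S'_def by (intro sum.cong) auto
      finally show ?thesis
        by (simp add: h'_def \<alpha>_def algebra_simps sum_subtractf sum_distrib_left sum_divide_distrib)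
    qed
    have "h' m' q = 0" for q using q0(2) by (simp add: h'_def)
    then have "\<forall>i<Suc m'. (\<Sum>q\<in>S. \<alpha> q * h i q) = 0"
      using \<beta>(2) by (auto simp: reduced less_Suc_eq)
    moreover have "\<exists>q\<in>S. \<alpha> q \<noteq> 0" using \<beta>(1) by (auto simp: \<alpha>_def S'_def)
    ultimately show ?thesis by blast
  qed
qed

lemma homogeneous_system_unit_solution:
  fixes m' k :: nat
  assumes "m' < k"
  shows "\<exists>\<beta>. (\<Sum>p<k. (\<beta> p)\<^sup>2) = 1 \<and> (\<forall>i<m'. (\<Sum>p<k. \<beta> p * h i p) = (0::real))"
proof -
  obtain \<alpha> where \<alpha>: "\<exists>q<k. \<alpha> q \<noteq> 0" "\<forall>i<m'. (\<Sum>p<k. \<alpha> p * h i p) = 0"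
    using homogeneous_system_nontrivial_solution[of "{..<k}" m' h] assms by auto
  define \<sigma> where "\<sigma> = (\<Sum>p<k. (\<alpha> p)\<^sup>2)"
  obtain q where "q < k" "\<alpha> q \<noteq> 0" using \<alpha>(1) by blast
  then have "\<sigma> > 0"
    unfolding \<sigma>_def by (intro sum_pos2[of _ q]) auto
  then have unit: "(\<Sum>p<k. (\<alpha> p / sqrt \<sigma>)\<^sup>2) = 1"
    unfolding power_divide sum_divide_distrib[symmetric] \<sigma>_def[symmetric] by simp
  have orth: "\<forall>i<m'. (\<Sum>p<k. \<alpha> p / sqrt \<sigma> * h i p) = 0"
  proof (intro allI impI)
    fix i assume "i < m'"
    have "(\<Sum>p<k. \<alpha> p / sqrt \<sigma> * h i p) = (\<Sum>p<k. \<alpha> p * h i p) / sqrt \<sigma>"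
      by (simp add: sum_divide_distrib)
    then show "(\<Sum>p<k. \<alpha> p / sqrt \<sigma> * h i p) = 0" using \<alpha>(2) \<open>i < m'\<close> by simp
  qed
  show ?thesis by (intro exI[of _ "\<lambda>p. \<alpha> p / sqrt \<sigma>"] conjI unit orth)
qed

lemma exists_tensor_direction:
  assumes N: "N = n * k" and "m' < k"
    and kron: "\<forall>i<m'. \<forall>r<N. \<forall>s<N. A i r s = kron_I n (M i) r s"
  shows "\<exists>u. vec_on N u
    \<and> (\<forall>i<m'. qform N (A i) u = qform n (M i) v \<and> (\<Sum>s<N. g i s * u s) = 0)"
proof -
  obtain \<beta> where \<beta>: "(\<Sum>p<k. (\<beta> p)\<^sup>2) = 1"
    "\<forall>i<m'. (\<Sum>p<k. \<beta> p * (\<Sum>a<n. g i (p * n + a) * v a)) = 0"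
    using homogeneous_system_unit_solution[OF \<open>m' < k\<close>, of "\<lambda>i p. \<Sum>a<n. g i (p * n + a) * v a"]
    by blast
  have "qform N (A i) (tensor_vec n k \<beta> v) = qform n (M i) v" if "i < m'" for i
    using kron that \<beta>(1) unfolding N by (intro qform_tensor_vec) auto
  moreover have "(\<Sum>s<N. g i s * tensor_vec n k \<beta> v s) = 0" if "i < m'" for i
    using \<beta>(2) that unfolding N sum_tensor_vec by blast
  ultimately show ?thesis
    using vec_on_tensor_vec[of n k \<beta> v] unfolding N by blast
qed

lemma qfun_shift:
  assumes "sym_mat N A"
  shows "qfun N A b c (\<lambda>r. x r + e * u r) = qfun N A b c x + e\<^sup>2 * qform N A u
      + 2 * e * (\<Sum>s<N. ((\<Sum>r<N. x r * A r s) + b s) * u s)"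
proof -
  have "bform N A u x = bform N A x u"
    using assms unfolding bform_def sym_mat_def
    by (subst sum.swap) (auto intro!: sum.cong simp: mult.commute)
  then have quad: "qform N A (\<lambda>r. x r + e * u r) = qform N A x + 2 * e * bform N A x u + e\<^sup>2 * qform N A u"
    using qform_lincomb[of N A 1 x e u] by simp
  have grad: "(\<Sum>s<N. ((\<Sum>r<N. x r * A r s) + b s) * u s) = bform N A x u + (\<Sum>s<N. b s * u s)"
    unfolding bform_def by (subst sum.swap) (simp add: sum.distrib sum_distrib_left sum_distrib_right algebra_simps)
  have lin: "(\<Sum>r<N. b r * (x r + e * u r)) = (\<Sum>r<N. b r * x r) + e * (\<Sum>r<N. b r * u r)"
    by (simp add: algebra_simps sum.distrib sum_distrib_left)
  show ?thesis
    unfolding qfun_def quad grad lin by (simp add: algebra_simps)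
qed

definition Dset_shifted :: "nat \<Rightarrow> nat \<Rightarrow> nat \<Rightarrow> (nat \<Rightarrow> nat \<Rightarrow> nat \<Rightarrow> real) \<Rightarrow> (nat \<Rightarrow> nat \<Rightarrow> real)
    \<Rightarrow> (nat \<Rightarrow> real) \<Rightarrow> (nat \<Rightarrow> real) \<Rightarrow> ((nat \<Rightarrow> real) \<times> real) set" where
  "Dset_shifted N mI m A b c s = {(x, t). vec_on N x
     \<and> (\<forall>i\<in>{1..mI}. qfun N (A i) (b i) (c i) x + s i \<le> 0)
     \<and> (\<forall>i\<in>{mI+1..m}. qfun N (A i) (b i) (c i) x + s i = 0)
     \<and> qfun N (A 0) (b 0) (c 0) x + s 0 \<le> 2 * t}"

lemma Dset_shifted_zero: "Dset_shifted N mI m A b c (\<lambda>_. 0) = Dset N mI m A b c"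
  by (auto simp: Dset_shifted_def Dset_def feasible_def)

lemma Dset_shifted_transfer:
  assumes "(x, t) \<in> Dset_shifted N mI m A b c (\<lambda>i. d i + s i)" and "mI \<le> m" and "vec_on N y"
    and "\<forall>i\<le>m. qfun N (A i) (b i) (c i) y = qfun N (A i) (b i) (c i) x + d i"
  shows "(y, t) \<in> Dset_shifted N mI m A b c s"
  using assms by (auto simp: Dset_shifted_def add.assoc)

lemma Dsdp_subset_Dset_shifted:
  assumes "(x, t) \<in> Dsdp N mI m A b c"
  shows "\<exists>Z. psd_mat N Z \<and> (x, t) \<in> Dset_shifted N mI m A b c (\<lambda>i. frob N (A i) Z)"
proof -
  obtain X where "vec_on N x" and "sdp_witness N mI m A b c x t X"
    using assms by (auto simp: mem_Dsdp_iff)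
  then show ?thesis
    using psd_mat_schur_complement[of N x X]
    by (intro exI[of _ "\<lambda>r s. X r s - x r * x s"])
      (simp add: sdp_witness_def Dset_shifted_def frob_block_mat)
qed

lemma frob_sum_rank_one: "frob N A (\<lambda>r s. \<Sum>z\<leftarrow>zs. z r * z s) = (\<Sum>z\<leftarrow>zs. qform N A z)"
  by (induction zs) (simp_all add: frob_def qform_def algebra_simps sum.distrib)

lemma frob_psd_eq_sum_qform:
  assumes "psd_mat N Z"
  shows "\<exists>zs. \<forall>A. frob N A Z = (\<Sum>z\<leftarrow>zs. qform N A z)"
proof -
  obtain zs where zs: "\<forall>r<N. \<forall>s<N. Z r s = (\<Sum>z\<leftarrow>zs. z r * z s)"
    using psd_mat_sum_rank_one[OF assms] by blast
  then have "frob N A Z = frob N A (\<lambda>r s. \<Sum>z\<leftarrow>zs. z r * z s)" for A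
    unfolding frob_def by (intro sum.cong refl) auto
  then show ?thesis unfolding frob_sum_rank_one by blast
qed

lemma sum_qform_kron_I_blocks:
  assumes "\<forall>i\<le>m. \<forall>r<n * k. \<forall>s<n * k. A i r s = kron_I n (M i) r s"
  shows "\<exists>vs. \<forall>i\<le>m. (\<Sum>z\<leftarrow>zs. qform (n * k) (A i) z) = (\<Sum>v\<leftarrow>vs. qform n (M i) v)"
proof (induction zs)
  case Nil
  show ?case by (intro exI[of _ "[]"]) simp
next
  case (Cons z zs)
  then obtain vs where vs: "\<forall>i\<le>m. (\<Sum>z\<leftarrow>zs. qform (n * k) (A i) z) = (\<Sum>v\<leftarrow>vs. qform n (M i) v)"
    by blast
  let ?blocks = "map (\<lambda>p a. z (p * n + a)) [0..<k]"
  have "(\<Sum>z\<leftarrow>z # zs. qform (n * k) (A i) z) = (\<Sum>v\<leftarrow>?blocks @ vs. qform n (M i) v)" if "i \<le> m" for i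
    using assms that vs
    by (simp add: qform_kron_I interv_sum_list_conv_sum_set_nat atLeast0LessThan o_def)
  then show ?case by blast
qed

lemma Dset_shifted_subset_conv_hull:
  assumes N: "N = n * k" and k: "Suc m < k" and mI: "mI \<le> m"
    and sym: "\<forall>i\<le>m. sym_mat N (A i)"
    and kron: "\<forall>i\<le>m. \<forall>r<N. \<forall>s<N. A i r s = kron_I n (M i) r s"
  shows "(x, t) \<in> Dset_shifted N mI m A b c (\<lambda>i. \<Sum>v\<leftarrow>vs. qform n (M i) v)
    \<Longrightarrow> (x, t) \<in> conv_hull (Dset N mI m A b c)"
proof (induction vs arbitrary: x)
  case Nil
  then show ?case using Dset_shifted_zero conv_hull_superset by simp
next
  case (Cons v vs)
  define g where "g = (\<lambda>i s. (\<Sum>r<N. x r * A i r s) + b i s)"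
  obtain u where "vec_on N u"
    and u: "\<forall>i<Suc m. qform N (A i) u = qform n (M i) v \<and> (\<Sum>s<N. g i s * u s) = 0"
    using exists_tensor_direction[OF N k, of A M v g] kron by auto
  have "(\<lambda>r. x r + e * u r, t) \<in> conv_hull (Dset N mI m A b c)" if "e\<^sup>2 = 1" for e
  proof (rule Cons.IH, rule Dset_shifted_transfer[OF _ mI])
    show "(x, t) \<in> Dset_shifted N mI m A b c (\<lambda>i. qform n (M i) v + (\<Sum>v\<leftarrow>vs. qform n (M i) v))"
      using Cons.prems by simp
    show "vec_on N (\<lambda>r. x r + e * u r)"
      using Cons.prems \<open>vec_on N u\<close> by (simp add: Dset_shifted_def vec_on_def)
    show "\<forall>i\<le>m. qfun N (A i) (b i) (c i) (\<lambda>r. x r + e * u r)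
        = qfun N (A i) (b i) (c i) x + qform n (M i) v"
      using sym u that by (simp add: qfun_shift g_def less_Suc_eq_le)
  qed
  from conv_hull_midpoint[OF this[of 1] this[of "-1"]]
  show ?case by simp
qed

lemma Dsdp_subset_conv_hull:
  assumes N: "N = n * k" and "Suc m < k" and "mI \<le> m"
    and "\<forall>i\<le>m. sym_mat N (A i)"
    and kron: "\<forall>i\<le>m. \<forall>r<N. \<forall>s<N. A i r s = kron_I n (M i) r s"
  shows "Dsdp N mI m A b c \<subseteq> conv_hull (Dset N mI m A b c)"
proof safe
  fix x t assume "(x, t) \<in> Dsdp N mI m A b c"
  then obtain Z where "psd_mat N Z" and Z: "(x, t) \<in> Dset_shifted N mI m A b c (\<lambda>i. frob N (A i) Z)"
    using Dsdp_subset_Dset_shifted by blast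
  then obtain zs where zs: "\<forall>A. frob N A Z = (\<Sum>z\<leftarrow>zs. qform N A z)"
    using frob_psd_eq_sum_qform by blast
  obtain vs where "\<forall>i\<le>m. (\<Sum>z\<leftarrow>zs. qform N (A i) z) = (\<Sum>v\<leftarrow>vs. qform n (M i) v)"
    using sum_qform_kron_I_blocks[of m n k A M zs] kron unfolding N by blast
  then have "(x, t) \<in> Dset_shifted N mI m A b c (\<lambda>i. \<Sum>v\<leftarrow>vs. qform n (M i) v)"
    using Z zs \<open>mI \<le> m\<close> by (auto simp: Dset_shifted_def)
  then show "(x, t) \<in> conv_hull (Dset N mI m A b c)"
    using Dset_shifted_subset_conv_hull assms by blast
qed

lemma has_multiplicity_quad_eig_mult:
  assumes "N \<ge> 1" and "\<forall>i\<le>m. sym_mat N (A i)"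
  shows "has_multiplicity N m A (quad_eig_mult N m A)"
  unfolding quad_eig_mult_def
proof (rule GreatestI_nat)
  show "has_multiplicity N m A 1"
    using assms(2) unfolding has_multiplicity_def
    by (intro exI[of _ N]) (auto simp: kron_I_def intro!: exI[of _ "A _"])
  show "k \<le> N" if "has_multiplicity N m A k" for k
    using that assms(1) unfolding has_multiplicity_def by (auto simp: Suc_le_eq)
qed

theorem mainTheorem19:
  fixes N mI mE m :: nat
    and A :: "nat \<Rightarrow> nat \<Rightarrow> nat \<Rightarrow> real"
    and b :: "nat \<Rightarrow> nat \<Rightarrow> real"
    and c :: "nat \<Rightarrow> real"
  assumes "N \<ge> 1"
    and "m = mI + mE" and "m \<ge> 1"
    and "\<forall>i\<le>m. sym_mat N (A i)"
    and "\<exists>x. feasible N mI m A b c x"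
    and "\<exists>\<gamma>. (\<forall>i\<in>{1..mI}. \<gamma> i \<ge> 0) \<and> pd_mat N (Agamma m A \<gamma>)"
    and "quad_eig_mult N m A \<ge> m + 2"
  shows "conv_hull (Dset N mI m A b c) = Dsdp N mI m A b c"
proof
  obtain n where N: "N = n * quad_eig_mult N m A"
    and "\<forall>i\<le>m. \<exists>M. sym_mat n M \<and> (\<forall>r<N. \<forall>s<N. A i r s = kron_I n M r s)"
    using has_multiplicity_quad_eig_mult[OF assms(1,4)] unfolding has_multiplicity_def by blast
  then obtain M where kron: "\<forall>i\<le>m. \<forall>r<N. \<forall>s<N. A i r s = kron_I n (M i) r s"
    by metis
  show "Dsdp N mI m A b c \<subseteq> conv_hull (Dset N mI m A b c)"
    using Dsdp_subset_conv_hull[OF N _ _ assms(4) kron] assms(2,7) by simp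
qed (rule conv_hull_Dset_subset_Dsdp)

end
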